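(* Consider the continuous-time LPV system $$\dot x(t)=A(\rho)x(t)+B(\rho)u(t),\qquad y(t)=C(\rho)x(t),$$ with $x\in\mathbb{R}^n$, $u\in\mathbb{R}^m$, $y\in\mathbb{R}^p$, time-varying parameter $\rho(t)\in\Omega\subset\mathbb{R}^r$, and $A,B,C$ polynomial or rational in $\rho$. Assume it is given in the differential-algebraic representation (DAR) $$\dot x=A_1x+A_2\pi+A_3u,\qquad y=C_1x+C_2\pi,\qquad 0=\Upsilon_1(\rho)x+\Upsilon_2(\rho)\pi+\Upsilon_3(\rho)u,$$ as described in the context, with vertex matrices $\Upsilon_{1_i},\Upsilon_{2_i},\Upsilon_{3_i}$, $i=1,\dots,N$, and set $C_{d_i}=\begin{bmatrix}\Upsilon_{1_i}&\Upsilon_{2_i}&\Upsilon_{3_i}\end{bmatrix}$. Let a scalar $\beta$ be given. Suppose there exist symmetric matrices $P\succ0$ ($n\times n$), $H_i\succ0$ ($n\times n$), $R\succ0$ ($m\times m$), $Q_i$ ($p\times p$), matrices $S_i\in\mathbb{R}^{p\times m}$ ($i=1,\dots,N$), and a matrix $L\in\mathbb{R}^{(n+n_\pi+m)\times n_\pi}$ such that, for all $i=1,\dots,N$, $$Y_i+LC_{d_i}+C_{d_i}^\top L^\top\prec0,\qquad X_{d_i}+L_sC_{s_i}+C_{s_i}^\top L_s^\top\prec0,$$ where $$Y_i=\begin{bmatrix}PA_1+A_1^\top P-C_1^\top Q_iC_1+H_i&\star&\star\\ (PA_2-C_1^\top Q_iC_2)^\top&-C_2^\top Q_iC_2&\star\\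 (PA_3-C_1^\top S_i)^\top&-S_i^\top C_2&-R\end{bmatrix},\quad X_{d_i}=\begin{bmatrix}Q_i&S_i\\ S_i^\top&R\end{bmatrix},$$ $C_{s_i}=\begin{bmatrix}S_i^\top&R\end{bmatrix}$, and $L_s\in\mathbb{R}^{(p+m)\times m}$ is defined by $L_s^\top=\begin{bmatrix}\beta\mathbf{1}_{m\times p}&-I_m\end{bmatrix}$. Then the system is robust strictly QSR-dissipative for all $\rho(t)\in\Omega$ (with storage function $V(x)=x^\top Px$, $T(x,\rho)=x^\top H(\rho)x$, $H(\rho)=\sum_i\alpha_iH_i$, and supply-rate matrices $Q(\rho)=\sum_i\alpha_iQ_i$, $S(\rho)=\sum_i\alpha_iS_i$, $R$), and the gain-scheduled static output feedback $$u=K(\rho)y,\qquad K(\rho)=\sum_{i=1}^N\alpha_i(\rho)K_i,\qquad K_i=-R^{-1}S_i^\top,$$ asymptotically stabilizes the system around the origin for all $\rho\in\Omega$.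
   Context: Standing assumption: the parameter vector $\rho(t)\in\mathbb{R}^r$ is bounded and lies in a polytope $\Omega$ with $N=2^r$ vertices; every $\rho\in\Omega$ is written as a convex combination of the vertices with weights $\alpha(\rho)=(\alpha_1,\dots,\alpha_N)$, $\alpha_i\ge0$, $\sum_i\alpha_i=1$. DAR: $\pi=\pi(x,\rho,u)\in\mathbb{R}^{n_\pi}$ is an auxiliary vector collecting the terms depending nonlinearly on $\rho$; $A_1\in\mathbb{R}^{n\times n}$, $A_2\in\mathbb{R}^{n\times n_\pi}$, $A_3\in\mathbb{R}^{n\times m}$, $C_1\in\mathbb{R}^{p\times n}$, $C_2\in\mathbb{R}^{p\times n_\pi}$ are constant; $\Upsilon_1(\rho)\in\mathbb{R}^{n_\pi\times n}$, $\Upsilon_2(\rho)\in\mathbb{R}^{n_\pi\times n_\pi}$, $\Upsilon_3(\rho)\in\mathbb{R}^{n_\pi\times m}$ are affine in $\rho$, with $\Upsilon_2(\rho)$ invertible, and the DAR is an exact representation of the LPV system (eliminating $\pi$ via the algebraic equation recovers $A(\rho),B(\rho),C(\rho)$). Being affine, $\Upsilon_k(\rho)=\sum_{i=1}^N\alpha_i\Upsilon_{k_i}$, where $\Upsilon_{k_i}$ is the value at the $i$-th vertex. Notation: $\star$ denotes blocks determined by symmetry; $\mathbf{1}$ is an all-ones matrix. Robust strict QSR-dissipativity: with $V(x)=x^\top Px$, $T(x,\rho)=x^\top H(\rho)x$, the system is robust strictly QSR-dissipative if for all $\rho\in\Omega$ and all $(x,\pi,u)$ satisfying the DAR algebraic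 constraint, $t_d(x,u,\rho):=\nabla V^\top[A_1x+A_2\pi+A_3u]+x^\top H(\rho)x-y^\top Q(\rho)y-2y^\top S(\rho)u-u^\top Ru\le0$, where $y=C_1x+C_2\pi$. *)

theory Defs
  imports "HOL-Analysis.Analysis"
begin

definition blk2 :: "real^'b^'a \<Rightarrow> real^'d^'a \<Rightarrow> real^'b^'c \<Rightarrow> real^'d^'c
                     \<Rightarrow> real^('b + 'd)^('a + 'c)" where
  "blk2 M11 M12 M21 M22 = (\<chi> i j. (case i of
       Inl a \<Rightarrow> (case j of Inl b \<Rightarrow> M11 $ a $ b | Inr d \<Rightarrow> M12 $ a $ d)
     | Inr c \<Rightarrow> (case j of Inl b \<Rightarrow> M21 $ c $ b | Inr d \<Rightarrow> M22 $ c $ d)))"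

definition hcat :: "real^'b^'a \<Rightarrow> real^'d^'a \<Rightarrow> real^('b + 'd)^'a" where
  "hcat M1 M2 = (\<chi> i j. (case j of Inl b \<Rightarrow> M1 $ i $ b | Inr d \<Rightarrow> M2 $ i $ d))"

definition vcat :: "real^'b^'a \<Rightarrow> real^'b^'c \<Rightarrow> real^'b^('a + 'c)" where
  "vcat M1 M2 = (\<chi> i j. (case i of Inl a \<Rightarrow> M1 $ a $ j | Inr c \<Rightarrow> M2 $ c $ j))"

definition blk3sym ::
  "real^'n^'n \<Rightarrow> real^'n^'q \<Rightarrow> real^'q^'q \<Rightarrow> real^'n^'m \<Rightarrow> real^'q^'m \<Rightarrow> real^'m^'m
   \<Rightarrow> real^(('n + 'q) + 'm)^(('n + 'q) + 'm)" where
  "blk3sym M11 M21 M22 M31 M32 M33 =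
     blk2 (blk2 M11 (transpose M21) M21 M22)
          (vcat (transpose M31) (transpose M32))
          (hcat M31 M32) M33"

definition ones :: "real^'b^'a" where "ones = (\<chi> i j. 1)"

definition pos_def :: "real^'n^'n \<Rightarrow> bool" where
  "pos_def M \<longleftrightarrow> transpose M = M \<and> (\<forall>z. z \<noteq> 0 \<longrightarrow> z \<bullet> (M *v z) > 0)"

definition neg_def :: "real^'n^'n \<Rightarrow> bool" where
  "neg_def M \<longleftrightarrow> transpose M = M \<and> (\<forall>z. z \<noteq> 0 \<longrightarrow> z \<bullet> (M *v z) < 0)"

definition wsum :: "('v::finite \<Rightarrow> real) \<Rightarrow> ('v \<Rightarrow> 'a::real_vector) \<Rightarrow> 'a" where
  "wsum w M = (\<Sum>i\<in>UNIV. w i *\<^sub>R M i)"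

definition robust_strict_QSR_dissipative ::
  "(real^'r) set \<Rightarrow> (real^'r \<Rightarrow> 'v::finite \<Rightarrow> real)
   \<Rightarrow> real^'n^'n \<Rightarrow> real^'q^'n \<Rightarrow> real^'m^'n \<Rightarrow> real^'n^'p \<Rightarrow> real^'q^'p
   \<Rightarrow> ('v \<Rightarrow> real^'n^'q) \<Rightarrow> ('v \<Rightarrow> real^'q^'q) \<Rightarrow> ('v \<Rightarrow> real^'m^'q)
   \<Rightarrow> real^'n^'n \<Rightarrow> ('v \<Rightarrow> real^'n^'n) \<Rightarrow> ('v \<Rightarrow> real^'p^'p) \<Rightarrow> ('v \<Rightarrow> real^'m^'p)
   \<Rightarrow> real^'m^'m \<Rightarrow> bool" where
  "robust_strict_QSR_dissipative \<Omega> \<alpha> A1 A2 A3 C1 C2 Ups1 Ups2 Ups3 P H Q S R \<longleftrightarrow>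
     (\<forall>\<rho>\<in>\<Omega>. \<forall>x \<pi> u.
        wsum (\<alpha> \<rho>) Ups1 *v x + wsum (\<alpha> \<rho>) Ups2 *v \<pi> + wsum (\<alpha> \<rho>) Ups3 *v u = 0 \<longrightarrow>
        (let y = C1 *v x + C2 *v \<pi>;
             gradV = (P + transpose P) *v x
         in gradV \<bullet> (A1 *v x + A2 *v \<pi> + A3 *v u) + x \<bullet> (wsum (\<alpha> \<rho>) H *v x)
            - y \<bullet> (wsum (\<alpha> \<rho>) Q *v y) - 2 * (y \<bullet> (wsum (\<alpha> \<rho>) S *v u))
            - u \<bullet> (R *v u) \<le> 0))"

definition cl_solution ::
  "(real^'r \<Rightarrow> real^'n^'n) \<Rightarrow> (real^'r \<Rightarrow> real^'m^'n) \<Rightarrow> (real^'r \<Rightarrow> real^'n^'p)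
   \<Rightarrow> (real^'r \<Rightarrow> real^'p^'m) \<Rightarrow> (real \<Rightarrow> real^'r) \<Rightarrow> (real \<Rightarrow> real^'n) \<Rightarrow> bool" where
  "cl_solution A B C K \<rho> x \<longleftrightarrow>
     (\<forall>t\<ge>0. (x has_vector_derivative
               (A (\<rho> t) *v x t + B (\<rho> t) *v (K (\<rho> t) *v (C (\<rho> t) *v x t))))
             (at t within {0..}))"

definition asymptotically_stabilizes ::
  "(real^'r) set \<Rightarrow> (real^'r \<Rightarrow> real^'n^'n) \<Rightarrow> (real^'r \<Rightarrow> real^'m^'n)
   \<Rightarrow> (real^'r \<Rightarrow> real^'n^'p) \<Rightarrow> (real^'r \<Rightarrow> real^'p^'m) \<Rightarrow> bool" where
  "asymptotically_stabilizes \<Omega> A B C K \<longleftrightarrow>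
     (\<forall>\<rho>. (\<forall>t\<ge>0. \<rho> t \<in> \<Omega>) \<longrightarrow>
        (\<forall>\<epsilon>>0. \<exists>\<delta>>0. \<forall>x. cl_solution A B C K \<rho> x \<and> norm (x 0) < \<delta>
                         \<longrightarrow> (\<forall>t\<ge>0. norm (x t) < \<epsilon>)) \<and>
        (\<exists>\<delta>>0. \<forall>x. cl_solution A B C K \<rho> x \<and> norm (x 0) < \<delta>
                  \<longrightarrow> (x \<longlongrightarrow> 0) at_top))"

end

theory Submission
  imports Defs "HOL-Real_Asymp.Real_Asymp"
begin

(* Both LMIs are Finsler conditions at the vertices: the quadratic form of
   M_i + L C_i + C_i^T L^T at \<xi> is \<xi>^T M_i \<xi> + 2 (L^T \<xi>)^T (C_i \<xi>), and averaging with the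
   weights \<alpha>(\<rho>) turns the multiplier term into 2 (L^T \<xi>)^T (C(\<rho>) \<xi>), which vanishes whenever
   C(\<rho>) \<xi> = 0.  For the first LMI, \<xi> = (x, \<pi>, u) and C(\<rho>) \<xi> = 0 is the algebraic equation of
   the DAR, which gives the dissipation inequality.  For the second, \<xi> = (y, u) and
   C(\<rho>) \<xi> = S(\<rho>)^T y + R u = 0 is exactly u = K(\<rho>) y, so the supply rate is nonpositive
   under the feedback; the particular multiplier L_s.  Eliminating \<pi>,
   the derivative of V = x^T P x along the closed loop is at most -x^T H(\<rho>) x, and since
   H(\<rho>) is uniformly positive definite over the polytope, V decays exponentially.  Only the
   weights \<alpha>(\<rho>) enter the argument, not the vertices of \<Omega> or their number. *)

lemma transpose_mult_inner: "(transpose M *v x) \<bullet> (y :: real^'n) = x \<bullet> (M *v y)"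
  by (simp add: dot_lmul_matrix)

lemma inner_transpose_mult: "(x :: real^'n) \<bullet> (transpose M *v y) = (M *v x) \<bullet> y"
  by (metis inner_commute transpose_mult_inner)

lemma inner_sym_matrix_mult: "transpose M = M \<Longrightarrow> (M *v x) \<bullet> y = x \<bullet> (M *v (y :: real^'n))"
  by (metis inner_transpose_mult)

lemma inner_matrix_mult: "(x :: real^'n) \<bullet> ((M ** N) *v y) = (transpose M *v x) \<bullet> (N *v y)"
  by (simp add: dot_lmul_matrix matrix_vector_mul_assoc[symmetric])

lemma uminus_matrix_vector_mult: "(- M) *v x = - (M *v (x :: real^'a))"
  by (simp add: matrix_vector_mult_def vec_eq_iff sum_negf)

lemma matrix_vector_mult_uminus: "M *v (- x) = - (M *v (x :: real^'a))"
  by (simp add: matrix_vector_mult_def vec_eq_iff sum_negf)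

lemma matrix_inv_right: "invertible (M :: real^'n^'n) \<Longrightarrow> M ** matrix_inv M = mat 1"
  unfolding invertible_def matrix_inv_def by (rule someI_ex[THEN conjunct1])

lemma pos_def_invertible:
  assumes "pos_def (M :: real^'n^'n)"
  shows "invertible M"
proof -
  have "M *v z = 0 \<Longrightarrow> z = 0" for z
    using assms unfolding pos_def_def by (metis inner_zero_right less_irrefl)
  then show ?thesis
    using invertible_left_inverse matrix_left_invertible_ker by blast
qed

lemma neg_def_quadratic_form_nonpos: "neg_def M \<Longrightarrow> z \<bullet> (M *v z) \<le> 0"
  unfolding neg_def_def by (cases "z = 0") (auto intro: less_imp_le)

lemma pos_def_coercive:
  assumes "pos_def (M :: real^'n^'n)"
  obtains c where "c > 0" and "\<And>z. c * (norm z)^2 \<le> z \<bullet> (M *v z)"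
proof -
  let ?S = "sphere (0 :: real^'n) 1"
  have "continuous_on ?S (\<lambda>z. z \<bullet> (M *v z))"
    by (intro continuous_intros linear_continuous_on matrix_vector_mul_bounded_linear)
  moreover have "?S \<noteq> {}"
    using vector_choose_size[of 1, where 'a = "real^'n"] by auto
  ultimately obtain z0 where z0: "z0 \<in> ?S" and min: "\<And>e. e \<in> ?S \<Longrightarrow> z0 \<bullet> (M *v z0) \<le> e \<bullet> (M *v e)"
    using continuous_attains_inf[OF compact_sphere] by blast
  define c where "c = z0 \<bullet> (M *v z0)"
  have "z0 \<noteq> 0"
    using z0 by auto
  then have "c > 0"
    using assms unfolding pos_def_def c_def by blast
  moreover have "c * (norm z)^2 \<le> z \<bullet> (M *v z)" for z
  proof (cases "z = 0")
    case False
    define e where "e = (1 / norm z) *\<^sub>R z"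
    have "e \<in> ?S"
      using False by (simp add: e_def)
    then have "c \<le> e \<bullet> (M *v e)"
      unfolding c_def by (rule min)
    also have "e \<bullet> (M *v e) = z \<bullet> (M *v z) / (norm z)^2"
      by (simp add: e_def matrix_vector_mult_scaleR power2_eq_square)
    finally show ?thesis
      using False by (simp add: field_simps)
  qed simp
  ultimately show ?thesis by (rule that)
qed

lemma quadratic_form_le_norm:
  obtains K where "K > 0" and "\<And>z. z \<bullet> ((M :: real^'n^'n) *v z) \<le> K * (norm z)^2"
proof -
  obtain K where "K > 0" and K: "\<And>z. norm (M *v z) \<le> norm z * K"
    using bounded_linear.pos_bounded[OF matrix_vector_mul_bounded_linear[of M]] by blast
  have "z \<bullet> (M *v z) \<le> K * (norm z)^2" for z
  proof -
    have "z \<bullet> (M *v z) \<le> norm z * norm (M *v z)" by (rule norm_cauchy_schwarz)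
    also have "\<dots> \<le> norm z * (norm z * K)" by (simp add: K mult_left_mono)
    finally show ?thesis by (simp add: power2_eq_square mult_ac)
  qed
  with \<open>K > 0\<close> show ?thesis by (rule that)
qed

definition vec_join :: "real^'a::finite \<Rightarrow> real^'b::finite \<Rightarrow> real^('a + 'b)" where
  "vec_join x y = (\<chi> k. case k of Inl a \<Rightarrow> x $ a | Inr b \<Rightarrow> y $ b)"

lemma sum_UNIV_sum_type:
  "(\<Sum>k\<in>(UNIV :: ('a::finite + 'b::finite) set). g k) = (\<Sum>a\<in>UNIV. g (Inl a)) + (\<Sum>b\<in>UNIV. g (Inr b))"
  by (simp add: UNIV_Plus_UNIV[symmetric] sum.Plus o_def del: UNIV_Plus_UNIV)

lemma inner_vec_join: "vec_join x y \<bullet> vec_join x' y' = x \<bullet> x' + y \<bullet> y'"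
  by (simp add: inner_vec_def sum_UNIV_sum_type vec_join_def)

lemma vec_join_add: "vec_join x y + vec_join x' y' = vec_join (x + x') (y + y')"
  by (simp add: vec_join_def vec_eq_iff split: sum.split)

lemma blk2_mult_vec_join:
  "blk2 M11 M12 M21 M22 *v vec_join x y = vec_join (M11 *v x + M12 *v y) (M21 *v x + M22 *v y)"
  by (simp add: blk2_def vec_join_def matrix_vector_mult_def vec_eq_iff sum_UNIV_sum_type
      split: sum.split)

lemma hcat_mult_vec_join: "hcat M1 M2 *v vec_join x y = M1 *v x + M2 *v y"
  by (simp add: hcat_def vec_join_def matrix_vector_mult_def vec_eq_iff sum_UNIV_sum_type)

lemma vcat_mult: "vcat M1 M2 *v z = vec_join (M1 *v z) (M2 *v z)"
  by (simp add: vcat_def vec_join_def matrix_vector_mult_def vec_eq_iff split: sum.split)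

lemma blk2_quadratic_form:
  "vec_join y u \<bullet> (blk2 M11 M12 M21 M22 *v vec_join y u)
   = y \<bullet> (M11 *v y) + y \<bullet> (M12 *v u) + u \<bullet> (M21 *v y) + u \<bullet> (M22 *v u)"
  by (simp add: blk2_mult_vec_join inner_vec_join inner_add_right)

lemma blk3sym_quadratic_form:
  "vec_join (vec_join x \<pi>) u \<bullet> (blk3sym M11 M21 M22 M31 M32 M33 *v vec_join (vec_join x \<pi>) u)
   = x \<bullet> (M11 *v x) + 2 * ((M21 *v x) \<bullet> \<pi>) + \<pi> \<bullet> (M22 *v \<pi>)
     + 2 * ((M31 *v x) \<bullet> u) + 2 * ((M32 *v \<pi>) \<bullet> u) + u \<bullet> (M33 *v u)"
  unfolding blk3sym_def
  by (simp add: blk2_mult_vec_join hcat_mult_vec_join vcat_mult vec_join_add inner_vec_join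
      inner_add_right inner_transpose_mult del: transpose_matrix_vector)
     (simp add: inner_commute)

section \<open>Finsler's lemma over a polytope\<close>

lemma wsum_mult_vector: "wsum w M *v (x :: real^'a) = (\<Sum>i\<in>UNIV. w i *\<^sub>R (M i *v x))"
proof -
  have sum_mult: "(\<Sum>i\<in>I. N i) *v x = (\<Sum>i\<in>I. N i *v x)"
    if "finite I" for I and N :: "'v \<Rightarrow> real^'a^'b"
    using that by (induction I rule: finite_induct) (auto simp: matrix_vector_mult_add_rdistrib)
  show ?thesis by (simp add: wsum_def sum_mult scaleR_matrix_vector_assoc)
qed

lemma inner_wsum_mult: "(y :: real^'b) \<bullet> (wsum w M *v x) = (\<Sum>i\<in>UNIV. w i * (y \<bullet> (M i *v x)))"
  by (simp add: wsum_mult_vector inner_sum_right)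

lemma sum_convex_weights_affine:
  fixes w :: "'v::finite \<Rightarrow> real"
  assumes "(\<Sum>i\<in>UNIV. w i) = 1"
  shows "(\<Sum>i\<in>UNIV. w i * (c + f i)) = c + (\<Sum>i\<in>UNIV. w i * f i)"
  using assms by (simp add: distrib_left sum.distrib flip: sum_distrib_right)

definition finsler_form :: "real^'k^'k \<Rightarrow> real^'l^'k \<Rightarrow> real^'k^'l \<Rightarrow> real^'k^'k" where
  "finsler_form M L Cm = M + L ** Cm + transpose Cm ** transpose L"

lemma finsler_form_quadratic_form:
  fixes \<xi> :: "real^'k"
  shows "\<xi> \<bullet> (finsler_form M L Cm *v \<xi>)
    = \<xi> \<bullet> (M *v \<xi>) + 2 * ((transpose L *v \<xi>) \<bullet> (Cm *v \<xi>))"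
  unfolding finsler_form_def matrix_vector_mult_add_rdistrib inner_add_right inner_matrix_mult
    transpose_transpose
  by (simp add: inner_commute)

lemma finsler_convex_nonpos:
  fixes w :: "'v::finite \<Rightarrow> real" and \<xi> :: "real^'k"
    and M :: "'v \<Rightarrow> real^'k^'k" and Cm :: "'v \<Rightarrow> real^'k^'l" and L :: "real^'l^'k"
  assumes "\<And>i. w i \<ge> 0"
    and "\<And>i. neg_def (finsler_form (M i) L (Cm i))"
    and "wsum w Cm *v \<xi> = 0"
  shows "(\<Sum>i\<in>UNIV. w i * (\<xi> \<bullet> (M i *v \<xi>))) \<le> 0"
proof -
  define \<mu> where "\<mu> = transpose L *v \<xi>"
  have "(\<Sum>i\<in>UNIV. w i * (\<xi> \<bullet> (M i *v \<xi>)))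
      = (\<Sum>i\<in>UNIV. w i * (\<xi> \<bullet> (finsler_form (M i) L (Cm i) *v \<xi>))) - 2 * (\<mu> \<bullet> (wsum w Cm *v \<xi>))"
    by (simp add: finsler_form_quadratic_form \<mu>_def inner_wsum_mult sum.distrib sum_distrib_left
        algebra_simps del: transpose_matrix_vector)
  also have "\<dots> \<le> 0"
    using assms by (simp add: sum_nonpos mult_nonneg_nonpos neg_def_quadratic_form_nonpos)
  finally show ?thesis .
qed

section \<open>The two LMIs\<close>

definition dissipation_block ::
  "real^'n^'n \<Rightarrow> real^'n^'n \<Rightarrow> real^'q^'n \<Rightarrow> real^'m^'n \<Rightarrow> real^'n^'p \<Rightarrow> real^'q^'p
   \<Rightarrow> real^'n^'n \<Rightarrow> real^'p^'p \<Rightarrow> real^'m^'p \<Rightarrow> real^'m^'m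
   \<Rightarrow> real^(('n + 'q) + 'm)^(('n + 'q) + 'm)" where
  "dissipation_block P A1 A2 A3 C1 C2 Hi Qi Si R =
     blk3sym (P ** A1 + transpose A1 ** P - transpose C1 ** Qi ** C1 + Hi)
             (transpose (P ** A2 - transpose C1 ** Qi ** C2))
             (- (transpose C2 ** Qi ** C2))
             (transpose (P ** A3 - transpose C1 ** Si))
             (- (transpose Si ** C2))
             (- R)"

definition dar_constraint_matrix ::
  "real^'n^'q \<Rightarrow> real^'q^'q \<Rightarrow> real^'m^'q \<Rightarrow> real^(('n + 'q) + 'm)^'q" where
  "dar_constraint_matrix U1 U2 U3 = hcat (hcat U1 U2) U3"

definition supply_block :: "real^'p^'p \<Rightarrow> real^'m^'p \<Rightarrow> real^'m^'m \<Rightarrow> real^('p + 'm)^('p + 'm)" where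
  "supply_block Qi Si R = blk2 Qi Si (transpose Si) R"

definition feedback_constraint_matrix :: "real^'m^'p \<Rightarrow> real^'m^'m \<Rightarrow> real^('p + 'm)^'m" where
  "feedback_constraint_matrix Si R = hcat (transpose Si) R"

lemma dissipation_block_quadratic_form:
  fixes x :: "real^'n" and \<pi> :: "real^'q" and u :: "real^'m"
    and P Hi :: "real^'n^'n" and A2 :: "real^'q^'n" and A3 :: "real^'m^'n"
    and C1 :: "real^'n^'p" and C2 :: "real^'q^'p" and Qi :: "real^'p^'p" and Si :: "real^'m^'p"
  assumes P_sym: "transpose P = P" and Q_sym: "transpose Qi = Qi"
  defines "y \<equiv> C1 *v x + C2 *v \<pi>"
  shows "vec_join (vec_join x \<pi>) u
           \<bullet> (dissipation_block P A1 A2 A3 C1 C2 Hi Qi Si R *v vec_join (vec_join x \<pi>) u)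
    = 2 * ((P *v x) \<bullet> (A1 *v x + A2 *v \<pi> + A3 *v u)) + x \<bullet> (Hi *v x)
      - y \<bullet> (Qi *v y) - 2 * (y \<bullet> (Si *v u)) - u \<bullet> (R *v u)"
proof -
  have Px: "transpose P *v x = P *v x" using P_sym by simp
  have "x \<bullet> ((P ** A1 + transpose A1 ** P - transpose C1 ** Qi ** C1 + Hi) *v x)
      = 2 * ((P *v x) \<bullet> (A1 *v x)) - (C1 *v x) \<bullet> (Qi *v (C1 *v x)) + x \<bullet> (Hi *v x)"
    by (simp add: matrix_vector_mult_add_rdistrib matrix_vector_mult_diff_rdistrib inner_add_right
        inner_diff_right inner_matrix_mult Px Q_sym inner_commute matrix_mul_assoc[symmetric]
        del: transpose_matrix_vector)
  moreover have "(transpose (P ** A2 - transpose C1 ** Qi ** C2) *v x) \<bullet> \<pi>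
      = (P *v x) \<bullet> (A2 *v \<pi>) - (C1 *v x) \<bullet> (Qi *v (C2 *v \<pi>))"
    by (simp add: transpose_mult_inner matrix_vector_mult_diff_rdistrib inner_diff_right
        inner_matrix_mult Px Q_sym inner_sym_matrix_mult[OF Q_sym] matrix_mul_assoc[symmetric]
        del: transpose_matrix_vector)
  moreover have "(transpose (P ** A3 - transpose C1 ** Si) *v x) \<bullet> u
      = (P *v x) \<bullet> (A3 *v u) - (C1 *v x) \<bullet> (Si *v u)"
    by (simp add: transpose_mult_inner matrix_vector_mult_diff_rdistrib inner_diff_right
        inner_matrix_mult Px del: transpose_matrix_vector)
  moreover have "\<pi> \<bullet> (- (transpose C2 ** Qi ** C2) *v \<pi>) = - ((C2 *v \<pi>) \<bullet> (Qi *v (C2 *v \<pi>)))"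
    by (simp add: uminus_matrix_vector_mult inner_matrix_mult Q_sym inner_commute matrix_mul_assoc[symmetric]
        del: transpose_matrix_vector)
  moreover have "(- (transpose Si ** C2) *v \<pi>) \<bullet> u = - ((C2 *v \<pi>) \<bullet> (Si *v u))"
    by (simp add: uminus_matrix_vector_mult transpose_mult_inner matrix_vector_mul_assoc[symmetric]
        del: transpose_matrix_vector)
  moreover have "(C2 *v \<pi>) \<bullet> (Qi *v (C1 *v x)) = (C1 *v x) \<bullet> (Qi *v (C2 *v \<pi>))"
    by (metis inner_sym_matrix_mult[OF Q_sym] inner_commute)
  ultimately show ?thesis
    unfolding dissipation_block_def blk3sym_quadratic_form y_def
    by (simp add: uminus_matrix_vector_mult inner_add_left inner_add_right matrix_vector_right_distrib
        algebra_simps)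
qed

lemma supply_block_quadratic_form:
  "vec_join y u \<bullet> (supply_block Qi Si R *v vec_join y u)
    = y \<bullet> (Qi *v y) + 2 * (y \<bullet> (Si *v u)) + u \<bullet> (R *v u)"
  by (simp add: supply_block_def blk2_quadratic_form inner_transpose_mult inner_commute
      del: transpose_matrix_vector)

lemma wsum_dar_constraint_matrix_mult:
  "wsum w (\<lambda>i. dar_constraint_matrix (U1 i) (U2 i) (U3 i)) *v vec_join (vec_join x \<pi>) u
    = wsum w U1 *v x + wsum w U2 *v \<pi> + wsum w U3 *v u"
  by (simp add: wsum_mult_vector dar_constraint_matrix_def hcat_mult_vec_join scaleR_add_right
      sum.distrib)

lemma wsum_feedback_constraint_matrix_mult:
  assumes "(\<Sum>i\<in>UNIV. w i) = 1"
  shows "wsum w (\<lambda>i. feedback_constraint_matrix (S i) R) *v vec_join y u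
    = (\<Sum>i\<in>UNIV. w i *\<^sub>R (transpose (S i) *v y)) + R *v u"
  using assms
  by (simp add: wsum_mult_vector feedback_constraint_matrix_def hcat_mult_vec_join scaleR_add_right
      sum.distrib del: transpose_matrix_vector flip: scaleR_sum_left)

lemma dissipation_inequality:
  fixes w :: "'v::finite \<Rightarrow> real" and x :: "real^'n" and \<pi> :: "real^'q" and u :: "real^'m"
    and P :: "real^'n^'n" and H :: "'v \<Rightarrow> real^'n^'n"
    and Q :: "'v \<Rightarrow> real^'p^'p" and S :: "'v \<Rightarrow> real^'m^'p"
    and C1 :: "real^'n^'p" and C2 :: "real^'q^'p"
  assumes w_nonneg: "\<And>i. w i \<ge> 0" and w_sum: "(\<Sum>i\<in>UNIV. w i) = 1"
    and P_sym: "transpose P = P" and Q_sym: "\<And>i. transpose (Q i) = Q i"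
    and LMI: "\<And>i. neg_def (finsler_form (dissipation_block P A1 A2 A3 C1 C2 (H i) (Q i) (S i) R) L
                  (dar_constraint_matrix (Ups1 i) (Ups2 i) (Ups3 i)))"
    and constraint: "wsum w Ups1 *v x + wsum w Ups2 *v \<pi> + wsum w Ups3 *v u = 0"
  defines "y \<equiv> C1 *v x + C2 *v \<pi>"
  shows "2 * ((P *v x) \<bullet> (A1 *v x + A2 *v \<pi> + A3 *v u)) + x \<bullet> (wsum w H *v x)
         - y \<bullet> (wsum w Q *v y) - 2 * (y \<bullet> (wsum w S *v u)) - u \<bullet> (R *v u) \<le> 0"
proof -
  let ?\<xi> = "vec_join (vec_join x \<pi>) u"
  let ?c = "2 * ((P *v x) \<bullet> (A1 *v x + A2 *v \<pi> + A3 *v u)) - u \<bullet> (R *v u)"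
  have vertex: "?\<xi> \<bullet> (dissipation_block P A1 A2 A3 C1 C2 (H i) (Q i) (S i) R *v ?\<xi>)
      = ?c + (x \<bullet> (H i *v x) - y \<bullet> (Q i *v y) - 2 * (y \<bullet> (S i *v u)))" for i
    unfolding dissipation_block_quadratic_form[OF P_sym Q_sym] y_def by simp
  have "(\<Sum>i\<in>UNIV. w i * (?\<xi> \<bullet> (dissipation_block P A1 A2 A3 C1 C2 (H i) (Q i) (S i) R *v ?\<xi>)))
      \<le> 0"
    using w_nonneg LMI
    by (rule finsler_convex_nonpos) (simp add: wsum_dar_constraint_matrix_mult constraint)
  also have "(\<Sum>i\<in>UNIV. w i * (?\<xi> \<bullet> (dissipation_block P A1 A2 A3 C1 C2 (H i) (Q i) (S i) R *v ?\<xi>)))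
      = ?c + (\<Sum>i\<in>UNIV. w i * (x \<bullet> (H i *v x) - y \<bullet> (Q i *v y) - 2 * (y \<bullet> (S i *v u))))"
    unfolding vertex by (rule sum_convex_weights_affine[OF w_sum])
  also have "\<dots> = 2 * ((P *v x) \<bullet> (A1 *v x + A2 *v \<pi> + A3 *v u)) + x \<bullet> (wsum w H *v x)
         - y \<bullet> (wsum w Q *v y) - 2 * (y \<bullet> (wsum w S *v u)) - u \<bullet> (R *v u)"
    by (simp add: inner_wsum_mult sum_subtractf right_diff_distrib sum_distrib_left mult.left_commute)
  finally show ?thesis .
qed

lemma robust_strict_QSR_dissipative_if_LMI:
  fixes \<alpha> :: "real^'r \<Rightarrow> 'v::finite \<Rightarrow> real" and P :: "real^'n^'n" and H :: "'v \<Rightarrow> real^'n^'n"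
    and Q :: "'v \<Rightarrow> real^'p^'p" and S :: "'v \<Rightarrow> real^'m^'p" and R :: "real^'m^'m"
    and C1 :: "real^'n^'p" and C2 :: "real^'q^'p"
  assumes alpha_nonneg: "\<And>\<rho> i. \<rho> \<in> \<Omega> \<Longrightarrow> \<alpha> \<rho> i \<ge> 0"
    and alpha_sum: "\<And>\<rho>. \<rho> \<in> \<Omega> \<Longrightarrow> (\<Sum>i\<in>UNIV. \<alpha> \<rho> i) = 1"
    and P_sym: "transpose P = P" and Q_sym: "\<And>i. transpose (Q i) = Q i"
    and LMI: "\<And>i. neg_def (finsler_form (dissipation_block P A1 A2 A3 C1 C2 (H i) (Q i) (S i) R) L
                  (dar_constraint_matrix (Ups1 i) (Ups2 i) (Ups3 i)))"
  shows "robust_strict_QSR_dissipative \<Omega> \<alpha> A1 A2 A3 C1 C2 Ups1 Ups2 Ups3 P H Q S R"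
  unfolding robust_strict_QSR_dissipative_def Let_def
proof (intro ballI allI impI)
  fix \<rho> x \<pi> u
  assume "\<rho> \<in> \<Omega>" and constraint: "wsum (\<alpha> \<rho>) Ups1 *v x + wsum (\<alpha> \<rho>) Ups2 *v \<pi> + wsum (\<alpha> \<rho>) Ups3 *v u = 0"
  have "((P + transpose P) *v x) \<bullet> v = 2 * ((P *v x) \<bullet> v)" for v
    by (simp only: P_sym matrix_vector_mult_add_rdistrib inner_add_left mult_2)
  with dissipation_inequality[OF alpha_nonneg[OF \<open>\<rho> \<in> \<Omega>\<close>] alpha_sum[OF \<open>\<rho> \<in> \<Omega>\<close>] P_sym Q_sym LMI constraint]
  show "((P + transpose P) *v x) \<bullet> (A1 *v x + A2 *v \<pi> + A3 *v u) + x \<bullet> (wsum (\<alpha> \<rho>) H *v x)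
      - (C1 *v x + C2 *v \<pi>) \<bullet> (wsum (\<alpha> \<rho>) Q *v (C1 *v x + C2 *v \<pi>))
      - 2 * ((C1 *v x + C2 *v \<pi>) \<bullet> (wsum (\<alpha> \<rho>) S *v u)) - u \<bullet> (R *v u) \<le> 0"
    by simp
qed

lemma feedback_supply_rate_nonpos:
  fixes w :: "'v::finite \<Rightarrow> real" and y :: "real^'p" and Q :: "'v \<Rightarrow> real^'p^'p"
    and S :: "'v \<Rightarrow> real^'m^'p" and R :: "real^'m^'m" and Ls :: "real^'m^('p + 'm)"
  assumes w_nonneg: "\<And>i. w i \<ge> 0" and w_sum: "(\<Sum>i\<in>UNIV. w i) = 1"
    and R_pd: "pos_def R"
    and LMI: "\<And>i. neg_def (finsler_form (supply_block (Q i) (S i) R) Ls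
                  (feedback_constraint_matrix (S i) R))"
  defines "u \<equiv> wsum w (\<lambda>i. - (matrix_inv R ** transpose (S i))) *v y"
  shows "y \<bullet> (wsum w Q *v y) + 2 * (y \<bullet> (wsum w S *v u)) + u \<bullet> (R *v u) \<le> 0"
proof -
  have R_inv: "R ** matrix_inv R = mat 1"
    by (rule matrix_inv_right[OF pos_def_invertible[OF R_pd]])
  have "R *v u = (\<Sum>i\<in>UNIV. w i *\<^sub>R (R *v (- (matrix_inv R ** transpose (S i)) *v y)))"
    unfolding u_def wsum_mult_vector
    by (simp add: linear_sum[OF matrix_vector_mul_linear] matrix_vector_mult_scaleR)
  also have "\<dots> = - (\<Sum>i\<in>UNIV. w i *\<^sub>R (transpose (S i) *v y))"
    by (simp add: uminus_matrix_vector_mult matrix_vector_mult_uminus matrix_vector_mul_assoc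
        matrix_mul_assoc R_inv sum_negf
        del: transpose_matrix_vector)
  finally have "wsum w (\<lambda>i. feedback_constraint_matrix (S i) R) *v vec_join y u = 0"
    by (simp add: wsum_feedback_constraint_matrix_mult[OF w_sum] del: transpose_matrix_vector)
  with w_nonneg LMI
  have "(\<Sum>i\<in>UNIV. w i * (vec_join y u \<bullet> (supply_block (Q i) (S i) R *v vec_join y u))) \<le> 0"
    by (rule finsler_convex_nonpos)
  also have "(\<Sum>i\<in>UNIV. w i * (vec_join y u \<bullet> (supply_block (Q i) (S i) R *v vec_join y u)))
      = u \<bullet> (R *v u) + (\<Sum>i\<in>UNIV. w i * (y \<bullet> (Q i *v y) + 2 * (y \<bullet> (S i *v u))))"
    unfolding supply_block_quadratic_form
    by (subst sum_convex_weights_affine[OF w_sum, symmetric]) (simp add: algebra_simps)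
  also have "\<dots> = y \<bullet> (wsum w Q *v y) + 2 * (y \<bullet> (wsum w S *v u)) + u \<bullet> (R *v u)"
    by (simp add: inner_wsum_mult sum.distrib distrib_left sum_distrib_left mult.left_commute)
  finally show ?thesis .
qed

lemma dar_elimination:
  fixes U1 :: "real^'n^'q" and U2 :: "real^'q^'q" and U3 :: "real^'m^'q"
    and x :: "real^'n" and u :: "real^'m"
  assumes "invertible U2"
  defines "\<pi> \<equiv> - (matrix_inv U2 *v (U1 *v x + U3 *v u))"
  shows "U1 *v x + U2 *v \<pi> + U3 *v u = 0"
    and "A1 *v x + A2 *v \<pi> + A3 *v u
      = (A1 - A2 ** matrix_inv U2 ** U1) *v x + (A3 - A2 ** matrix_inv U2 ** U3) *v u"
    and "C1 *v x + C2 *v \<pi>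
      = (C1 - C2 ** matrix_inv U2 ** U1) *v x - (C2 ** matrix_inv U2 ** U3) *v u"
  using matrix_inv_right[OF assms(1)]
  by (simp_all add: \<pi>_def matrix_vector_mult_uminus matrix_vector_mul_assoc matrix_mul_assoc
      algebra_simps)

lemma closed_loop_lyapunov_decrease:
  fixes w :: "'v::finite \<Rightarrow> real" and z :: "real^'n"
    and A0 A1 :: "real^'n^'n" and A2 :: "real^'q^'n" and A3 B0 :: "real^'m^'n"
    and C0 C1 :: "real^'n^'p" and C2 :: "real^'q^'p"
    and Ups1 :: "'v \<Rightarrow> real^'n^'q" and Ups2 :: "'v \<Rightarrow> real^'q^'q" and Ups3 :: "'v \<Rightarrow> real^'m^'q"
    and P :: "real^'n^'n" and H :: "'v \<Rightarrow> real^'n^'n" and R :: "real^'m^'m"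
    and Q :: "'v \<Rightarrow> real^'p^'p" and S :: "'v \<Rightarrow> real^'m^'p" and Ls :: "real^'m^('p + 'm)"
  assumes w_nonneg: "\<And>i. w i \<ge> 0" and w_sum: "(\<Sum>i\<in>UNIV. w i) = 1"
    and Ups2_inv: "invertible (wsum w Ups2)"
    and A0: "A0 = A1 - A2 ** matrix_inv (wsum w Ups2) ** wsum w Ups1"
    and B0: "B0 = A3 - A2 ** matrix_inv (wsum w Ups2) ** wsum w Ups3"
    and C0: "C0 = C1 - C2 ** matrix_inv (wsum w Ups2) ** wsum w Ups1"
    and D0: "C2 ** matrix_inv (wsum w Ups2) ** wsum w Ups3 = 0"
    and P_sym: "transpose P = P" and Q_sym: "\<And>i. transpose (Q i) = Q i" and R_pd: "pos_def R"
    and LMI_dissipation: "\<And>i. neg_def (finsler_form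
          (dissipation_block P A1 A2 A3 C1 C2 (H i) (Q i) (S i) R) L
          (dar_constraint_matrix (Ups1 i) (Ups2 i) (Ups3 i)))"
    and LMI_supply: "\<And>i. neg_def (finsler_form (supply_block (Q i) (S i) R) Ls
          (feedback_constraint_matrix (S i) R))"
  defines "K \<equiv> wsum w (\<lambda>i. - (matrix_inv R ** transpose (S i)))"
  shows "2 * ((P *v z) \<bullet> (A0 *v z + B0 *v (K *v (C0 *v z)))) \<le> - (z \<bullet> (wsum w H *v z))"
proof -
  define y where "y = C0 *v z"
  define u where "u = K *v y"
  define \<pi> where "\<pi> = - (matrix_inv (wsum w Ups2) *v (wsum w Ups1 *v z + wsum w Ups3 *v u))"
  note elimination = dar_elimination[OF Ups2_inv, where ?U1.0 = "wsum w Ups1" and ?U3.0 = "wsum w Ups3"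
    and x = z and u = u, folded \<pi>_def]
  have y_eq: "C1 *v z + C2 *v \<pi> = y"
    using elimination(3)[of C1 C2] by (simp add: y_def C0 D0)
  have xdot_eq: "A0 *v z + B0 *v (K *v (C0 *v z)) = A1 *v z + A2 *v \<pi> + A3 *v u"
    unfolding A0 B0 y_def[symmetric] u_def[symmetric] by (rule elimination(2)[symmetric])
  have dissipation: "2 * ((P *v z) \<bullet> (A1 *v z + A2 *v \<pi> + A3 *v u)) + z \<bullet> (wsum w H *v z)
        - y \<bullet> (wsum w Q *v y) - 2 * (y \<bullet> (wsum w S *v u)) - u \<bullet> (R *v u) \<le> 0"
    using dissipation_inequality[OF w_nonneg w_sum P_sym Q_sym LMI_dissipation elimination(1)]
    by (simp only: y_eq)
  have supply_rate: "y \<bullet> (wsum w Q *v y) + 2 * (y \<bullet> (wsum w S *v u)) + u \<bullet> (R *v u) \<le> 0"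
    unfolding u_def K_def by (rule feedback_supply_rate_nonpos[OF w_nonneg w_sum R_pd LMI_supply])
  show ?thesis
    unfolding xdot_eq using dissipation supply_rate by linarith
qed

section \<open>Exponential stability from a quadratic Lyapunov function\<close>

lemma wsum_pos_def_uniformly_coercive:
  fixes H :: "'v::finite \<Rightarrow> real^'n^'n"
  assumes "\<And>i. pos_def (H i)"
  obtains h where "h > 0"
    and "\<And>w z. (\<And>i. w i \<ge> 0) \<Longrightarrow> (\<Sum>i\<in>UNIV. w i) = 1 \<Longrightarrow> h * (norm z)^2 \<le> z \<bullet> (wsum w H *v z)"
proof -
  have "\<exists>c>0. \<forall>z. c * (norm z)^2 \<le> z \<bullet> (H i *v z)" for i
    by (rule pos_def_coercive[OF assms]) blast
  then obtain c where c_pos: "\<And>i. c i > 0" and c: "\<And>i z. c i * (norm z)^2 \<le> z \<bullet> (H i *v z)"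
    by metis
  define h where "h = Min (range c)"
  have "h > 0" unfolding h_def using c_pos by simp
  moreover have "h * (norm z)^2 \<le> z \<bullet> (wsum w H *v z)"
    if w_nonneg: "\<And>i. w i \<ge> 0" and w_sum: "(\<Sum>i\<in>UNIV. w i) = 1" for w z
  proof -
    have "h * (norm z)^2 = (\<Sum>i\<in>UNIV. w i * (h * (norm z)^2))"
      by (simp add: w_sum flip: sum_distrib_right)
    also have "\<dots> \<le> (\<Sum>i\<in>UNIV. w i * (z \<bullet> (H i *v z)))"
    proof (intro sum_mono mult_left_mono w_nonneg)
      fix i
      have "h \<le> c i" unfolding h_def by simp
      then have "h * (norm z)^2 \<le> c i * (norm z)^2" by (simp add: mult_right_mono)
      then show "h * (norm z)^2 \<le> z \<bullet> (H i *v z)" using c[of i z] by linarith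
    qed
    also have "\<dots> = z \<bullet> (wsum w H *v z)" by (simp add: inner_wsum_mult)
    finally show ?thesis .
  qed
  ultimately show ?thesis by (rule that)
qed

lemma has_real_derivative_quadratic_form:
  fixes P :: "real^'n^'n"
  assumes "transpose P = P" and "(x has_vector_derivative v) (at t within T)"
  shows "((\<lambda>s. x s \<bullet> (P *v x s)) has_real_derivative 2 * ((P *v x t) \<bullet> v)) (at t within T)"
proof -
  have x': "(x has_derivative (\<lambda>h. h *\<^sub>R v)) (at t within T)"
    using assms(2) by (simp add: has_vector_derivative_def)
  have "((\<lambda>s. x s \<bullet> (P *v x s)) has_derivative
         (\<lambda>h. x t \<bullet> (P *v (h *\<^sub>R v)) + (h *\<^sub>R v) \<bullet> (P *v x t))) (at t within T)"
    by (rule has_derivative_inner[OF x' bounded_linear.has_derivative[OF matrix_vector_mul_bounded_linear x']])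
  moreover have "(\<lambda>h. x t \<bullet> (P *v (h *\<^sub>R v)) + (h *\<^sub>R v) \<bullet> (P *v x t)) = (*) (2 * ((P *v x t) \<bullet> v))"
    using inner_sym_matrix_mult[OF assms(1), of "x t" v]
    by (auto simp: fun_eq_iff matrix_vector_mult_scaleR algebra_simps inner_commute)
  ultimately show ?thesis by (simp add: has_field_derivative_def)
qed

lemma exponential_decay_of_derivative_bound:
  fixes V D :: "real \<Rightarrow> real"
  assumes V': "\<And>t. t \<ge> 0 \<Longrightarrow> (V has_real_derivative D t) (at t within {0..})"
    and D_le: "\<And>t. t \<ge> 0 \<Longrightarrow> D t \<le> - c * V t"
    and "t \<ge> 0"
  shows "V t \<le> exp (- c * t) * V 0"
proof -
  define f where "f s = exp (c * s) * V s" for s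
  define f' where "f' s = exp (c * s) * (c * V s + D s)" for s
  have f': "(f has_real_derivative f' s) (at s within {0..t})" if "0 \<le> s" for s
  proof -
    have "(f has_real_derivative f' s) (at s within {0..})"
      unfolding f_def f'_def
      by (rule derivative_eq_intros V' that refl | simp add: algebra_simps)+
    then show ?thesis by (rule DERIV_subset) auto
  qed
  obtain s where s: "s \<in> {0..t}" and "f t - f 0 = (t - 0) * f' s"
    using mvt_very_simple[OF \<open>t \<ge> 0\<close>, of f "\<lambda>s h. h * f' s"] f'
    by (auto simp: has_field_derivative_def mult_commute_abs)
  moreover have "f' s \<le> 0"
    using D_le[of s] s unfolding f'_def by (intro mult_nonneg_nonpos) auto
  ultimately have "exp (c * t) * V t \<le> V 0"
    using mult_nonneg_nonpos[OF \<open>t \<ge> 0\<close>, of "f' s"] by (simp add: f_def)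
  then have "exp (- c * t) * (exp (c * t) * V t) \<le> exp (- c * t) * V 0"
    by (simp add: mult_left_mono)
  then show ?thesis by (simp add: exp_minus field_simps)
qed

lemma quadratic_lyapunov_exponential_bound:
  fixes P :: "real^'n^'n"
  assumes P_pd: "pos_def P" and "h > 0"
  obtains M c where "M > 0" and "c > 0"
    and "\<And>x f t. (\<And>s. s \<ge> 0 \<Longrightarrow> (x has_vector_derivative f s) (at s within {0..}))
      \<Longrightarrow> (\<And>s. s \<ge> 0 \<Longrightarrow> 2 * ((P *v x s) \<bullet> f s) \<le> - h * (norm (x s))^2)
      \<Longrightarrow> t \<ge> 0 \<Longrightarrow> (norm (x t))^2 \<le> M * (norm (x 0))^2 * exp (- c * t)"
proof -
  have P_sym: "transpose P = P" using P_pd by (simp add: pos_def_def)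
  obtain p where "p > 0" and P_lower: "\<And>z. p * (norm z)^2 \<le> z \<bullet> (P *v z)"
    using pos_def_coercive[OF P_pd] by blast
  obtain K where "K > 0" and P_upper: "\<And>z. z \<bullet> (P *v z) \<le> K * (norm z)^2"
    using quadratic_form_le_norm by blast
  have decay: "p * (norm (x t))^2 \<le> exp (- (h / K) * t) * (K * (norm (x 0))^2)"
    if x': "\<And>s. s \<ge> 0 \<Longrightarrow> (x has_vector_derivative f s) (at s within {0..})"
      and decrease: "\<And>s. s \<ge> 0 \<Longrightarrow> 2 * ((P *v x s) \<bullet> f s) \<le> - h * (norm (x s))^2"
      and "t \<ge> 0" for x f t
  proof -
    define V where "V s = x s \<bullet> (P *v x s)" for s
    have "V t \<le> exp (- (h / K) * t) * V 0"
    proof (rule exponential_decay_of_derivative_bound[OF _ _ \<open>t \<ge> 0\<close>])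
      show "(V has_real_derivative 2 * ((P *v x s) \<bullet> f s)) (at s within {0..})" if "s \<ge> 0" for s
        unfolding V_def by (rule has_real_derivative_quadratic_form[OF P_sym x'[OF that]])
      show "2 * ((P *v x s) \<bullet> f s) \<le> - (h / K) * V s" if "s \<ge> 0" for s
      proof -
        have "(h / K) * V s \<le> (h / K) * (K * (norm (x s))^2)"
          unfolding V_def using \<open>h > 0\<close> \<open>K > 0\<close> by (intro mult_left_mono P_upper) auto
        also have "\<dots> = h * (norm (x s))^2"
          using \<open>K > 0\<close> by simp
        finally show ?thesis using decrease[OF that] by simp
      qed
    qed
    also have "\<dots> \<le> exp (- (h / K) * t) * (K * (norm (x 0))^2)"
      unfolding V_def by (simp add: P_upper)
    finally show ?thesis using P_lower[of "x t"] unfolding V_def by linarith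
  qed
  have "(norm (x t))^2 \<le> K / p * (norm (x 0))^2 * exp (- (h / K) * t)"
    if "\<And>s. s \<ge> 0 \<Longrightarrow> (x has_vector_derivative f s) (at s within {0..})"
      and "\<And>s. s \<ge> 0 \<Longrightarrow> 2 * ((P *v x s) \<bullet> f s) \<le> - h * (norm (x s))^2"
      and "t \<ge> 0" for x f t
    using decay[OF that] \<open>p > 0\<close> by (simp add: field_simps)
  moreover have "K / p > 0" "h / K > 0"
    using \<open>p > 0\<close> \<open>K > 0\<close> \<open>h > 0\<close> by simp_all
  ultimately show ?thesis using that by blast
qed

lemma exponential_bound_imp_stable:
  fixes sol :: "(real \<Rightarrow> real^'n) \<Rightarrow> bool"
  assumes "M > 0" and "c > 0"
    and bound: "\<And>x t. sol x \<Longrightarrow> t \<ge> 0 \<Longrightarrow> (norm (x t))^2 \<le> M * (norm (x 0))^2 * exp (- c * t)"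
  shows "(\<forall>\<epsilon>>0. \<exists>\<delta>>0. \<forall>x. sol x \<and> norm (x 0) < \<delta> \<longrightarrow> (\<forall>t\<ge>0. norm (x t) < \<epsilon>))
       \<and> (\<exists>\<delta>>0. \<forall>x. sol x \<and> norm (x 0) < \<delta> \<longrightarrow> (x \<longlongrightarrow> 0) at_top)"
proof -
  have uniform: "(norm (x t))^2 \<le> M * (norm (x 0))^2" if "sol x" "t \<ge> 0" for x t
  proof -
    have "(norm (x t))^2 \<le> M * (norm (x 0))^2 * exp (- c * t)"
      by (rule bound[OF that])
    also have "\<dots> \<le> M * (norm (x 0))^2"
      using \<open>M > 0\<close> \<open>c > 0\<close> \<open>t \<ge> 0\<close> by (intro mult_left_le) auto
    finally show ?thesis .
  qed
  have stable: "\<forall>\<epsilon>>0. \<exists>\<delta>>0. \<forall>x. sol x \<and> norm (x 0) < \<delta> \<longrightarrow> (\<forall>t\<ge>0. norm (x t) < \<epsilon>)"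
  proof (intro allI impI)
    fix \<epsilon> :: real assume "\<epsilon> > 0"
    have "norm (x t) < \<epsilon>" if "sol x" "norm (x 0) < \<epsilon> / sqrt M" "t \<ge> 0" for x t
    proof -
      have "(norm (x t))^2 \<le> M * (norm (x 0))^2" by (rule uniform[OF that(1,3)])
      also have "\<dots> < M * (\<epsilon> / sqrt M)^2"
        using that(2) \<open>M > 0\<close> by (intro mult_strict_left_mono power_strict_mono) auto
      also have "\<dots> = \<epsilon>^2" using \<open>M > 0\<close> by (simp add: power_divide)
      finally show ?thesis using \<open>\<epsilon> > 0\<close> by (simp add: power_less_imp_less_base)
    qed
    moreover have "\<epsilon> / sqrt M > 0" using \<open>\<epsilon> > 0\<close> \<open>M > 0\<close> by simp
    ultimately show "\<exists>\<delta>>0. \<forall>x. sol x \<and> norm (x 0) < \<delta> \<longrightarrow> (\<forall>t\<ge>0. norm (x t) < \<epsilon>)" by blast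
  qed
  have attractive: "(x \<longlongrightarrow> 0) at_top" if "sol x" for x
  proof (rule Lim_null_comparison)
    show "\<forall>\<^sub>F t in at_top. norm (x t) \<le> sqrt (M * (norm (x 0))^2 * exp (- c * t))"
      using eventually_ge_at_top[of 0]
      by eventually_elim (metis bound[OF that] real_sqrt_abs real_sqrt_le_mono abs_norm_cancel)
    have "((\<lambda>t. exp (- c * t)) \<longlongrightarrow> 0) at_top"
      using \<open>c > 0\<close> by real_asymp
    then have "((\<lambda>t. sqrt (M * (norm (x 0))^2 * exp (- c * t)))
        \<longlongrightarrow> sqrt (M * (norm (x 0))^2 * 0)) at_top"
      by (intro tendsto_intros)
    then show "((\<lambda>t. sqrt (M * (norm (x 0))^2 * exp (- c * t))) \<longlongrightarrow> 0) at_top"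
      by simp
  qed
  show ?thesis
    using stable attractive zero_less_one by blast
qed

lemma asymptotically_stabilizes_if_quadratic_lyapunov:
  fixes P :: "real^'n^'n" and A :: "real^'r \<Rightarrow> real^'n^'n" and B :: "real^'r \<Rightarrow> real^'m^'n"
    and C :: "real^'r \<Rightarrow> real^'n^'p" and K :: "real^'r \<Rightarrow> real^'p^'m"
  assumes "pos_def P" and "h > 0"
    and decrease: "\<And>\<rho> z. \<rho> \<in> \<Omega>
      \<Longrightarrow> 2 * ((P *v z) \<bullet> (A \<rho> *v z + B \<rho> *v (K \<rho> *v (C \<rho> *v z)))) \<le> - h * (norm z)^2"
  shows "asymptotically_stabilizes \<Omega> A B C K"
proof -
  obtain M c where "M > 0" "c > 0" and bound: "\<And>x f t.
      (\<And>s. s \<ge> 0 \<Longrightarrow> (x has_vector_derivative f s) (at s within {0..}))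
      \<Longrightarrow> (\<And>s. s \<ge> 0 \<Longrightarrow> 2 * ((P *v x s) \<bullet> f s) \<le> - h * (norm (x s))^2)
      \<Longrightarrow> t \<ge> 0 \<Longrightarrow> (norm (x t))^2 \<le> M * (norm (x 0))^2 * exp (- c * t)"
    using quadratic_lyapunov_exponential_bound[OF assms(1,2)] by blast
  show ?thesis
    unfolding asymptotically_stabilizes_def
  proof (intro allI impI exponential_bound_imp_stable[OF \<open>M > 0\<close> \<open>c > 0\<close>])
    fix \<rho> x and t :: real
    assume "\<forall>t\<ge>0. \<rho> t \<in> \<Omega>" and "cl_solution A B C K \<rho> x" and "t \<ge> 0"
    then show "(norm (x t))^2 \<le> M * (norm (x 0))^2 * exp (- c * t)"
      unfolding cl_solution_def using decrease by (intro bound) auto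
  qed
qed

theorem theorem1:
  fixes \<Omega> :: "(real^'r) set"
    and vert :: "'v::finite \<Rightarrow> real^'r"
    and \<alpha> :: "real^'r \<Rightarrow> 'v \<Rightarrow> real"
    and A :: "real^'r \<Rightarrow> real^'n^'n" and B :: "real^'r \<Rightarrow> real^'m^'n"
    and C :: "real^'r \<Rightarrow> real^'n^'p"
    and A1 :: "real^'n^'n" and A2 :: "real^'q^'n" and A3 :: "real^'m^'n"
    and C1 :: "real^'n^'p" and C2 :: "real^'q^'p"
    and Ups1 :: "'v \<Rightarrow> real^'n^'q" and Ups2 :: "'v \<Rightarrow> real^'q^'q"
    and Ups3 :: "'v \<Rightarrow> real^'m^'q"
    and \<beta> :: real
    and P :: "real^'n^'n" and H :: "'v \<Rightarrow> real^'n^'n" and R :: "real^'m^'m"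
    and Q :: "'v \<Rightarrow> real^'p^'p" and S :: "'v \<Rightarrow> real^'m^'p"
    and L :: "real^'q^(('n + 'q) + 'm)"
  assumes N_vertices: "CARD('v) = 2 ^ CARD('r)"
    and Omega_polytope: "\<Omega> = convex hull (range vert)"
    and alpha_nonneg: "\<And>\<rho> i. \<rho> \<in> \<Omega> \<Longrightarrow> \<alpha> \<rho> i \<ge> 0"
    and alpha_sum: "\<And>\<rho>. \<rho> \<in> \<Omega> \<Longrightarrow> (\<Sum>i\<in>UNIV. \<alpha> \<rho> i) = 1"
    and alpha_coords: "\<And>\<rho>. \<rho> \<in> \<Omega> \<Longrightarrow> \<rho> = (\<Sum>i\<in>UNIV. \<alpha> \<rho> i *\<^sub>R vert i)"
    and Ups2_inv: "\<And>\<rho>. \<rho> \<in> \<Omega> \<Longrightarrow> invertible (wsum (\<alpha> \<rho>) Ups2)"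
    and exact_A: "\<And>\<rho>. \<rho> \<in> \<Omega> \<Longrightarrow>
        A \<rho> = A1 - A2 ** matrix_inv (wsum (\<alpha> \<rho>) Ups2) ** wsum (\<alpha> \<rho>) Ups1"
    and exact_B: "\<And>\<rho>. \<rho> \<in> \<Omega> \<Longrightarrow>
        B \<rho> = A3 - A2 ** matrix_inv (wsum (\<alpha> \<rho>) Ups2) ** wsum (\<alpha> \<rho>) Ups3"
    and exact_C: "\<And>\<rho>. \<rho> \<in> \<Omega> \<Longrightarrow>
        C \<rho> = C1 - C2 ** matrix_inv (wsum (\<alpha> \<rho>) Ups2) ** wsum (\<alpha> \<rho>) Ups1"
    and exact_D: "\<And>\<rho>. \<rho> \<in> \<Omega> \<Longrightarrow>
        C2 ** matrix_inv (wsum (\<alpha> \<rho>) Ups2) ** wsum (\<alpha> \<rho>) Ups3 = 0"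
    and P_pd: "pos_def P"
    and H_pd: "\<And>i. pos_def (H i)"
    and R_pd: "pos_def R"
    and Q_sym: "\<And>i. transpose (Q i) = Q i"
    and LMI1: "\<And>i. neg_def
        (blk3sym (P ** A1 + transpose A1 ** P - transpose C1 ** Q i ** C1 + H i)
                 (transpose (P ** A2 - transpose C1 ** Q i ** C2))
                 (- (transpose C2 ** Q i ** C2))
                 (transpose (P ** A3 - transpose C1 ** S i))
                 (- (transpose (S i) ** C2))
                 (- R)
         + L ** hcat (hcat (Ups1 i) (Ups2 i)) (Ups3 i)
         + transpose (hcat (hcat (Ups1 i) (Ups2 i)) (Ups3 i)) ** transpose L)"
    and LMI2: "\<And>i. neg_def
        (blk2 (Q i) (S i) (transpose (S i)) R
         + vcat (\<beta> *\<^sub>R (ones :: real^'m^'p)) (- mat 1) ** hcat (transpose (S i)) R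
         + transpose (hcat (transpose (S i)) R)
             ** transpose (vcat (\<beta> *\<^sub>R (ones :: real^'m^'p)) (- mat 1)))"
  shows "robust_strict_QSR_dissipative \<Omega> \<alpha> A1 A2 A3 C1 C2 Ups1 Ups2 Ups3 P H Q S R
         \<and> asymptotically_stabilizes \<Omega> A B C
             (\<lambda>\<rho>. wsum (\<alpha> \<rho>) (\<lambda>i. - (matrix_inv R ** transpose (S i))))"
proof -
  have P_sym: "transpose P = P"
    using P_pd by (simp add: pos_def_def)
  have LMI_dissipation: "neg_def (finsler_form
      (dissipation_block P A1 A2 A3 C1 C2 (H i) (Q i) (S i) R) L
      (dar_constraint_matrix (Ups1 i) (Ups2 i) (Ups3 i)))" for i
    using LMI1[of i] by (simp add: finsler_form_def dissipation_block_def dar_constraint_matrix_def)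
  have LMI_supply: "neg_def (finsler_form (supply_block (Q i) (S i) R)
      (vcat (\<beta> *\<^sub>R (ones :: real^'m^'p)) (- mat 1)) (feedback_constraint_matrix (S i) R))" for i
    using LMI2[of i] by (simp add: finsler_form_def supply_block_def feedback_constraint_matrix_def)
  obtain h where "h > 0" and H_coercive: "\<And>w z. (\<And>i. w i \<ge> 0) \<Longrightarrow> (\<Sum>i\<in>UNIV. w i) = 1
      \<Longrightarrow> h * (norm z)^2 \<le> z \<bullet> (wsum w H *v z)"
    using wsum_pos_def_uniformly_coercive[of H, OF H_pd] by blast
  have decrease: "2 * ((P *v z) \<bullet> (A \<rho> *v z + B \<rho> *v
           (wsum (\<alpha> \<rho>) (\<lambda>i. - (matrix_inv R ** transpose (S i))) *v (C \<rho> *v z))))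
        \<le> - h * (norm z)^2" if "\<rho> \<in> \<Omega>" for \<rho> z
    using closed_loop_lyapunov_decrease[OF alpha_nonneg[OF that] alpha_sum[OF that] Ups2_inv[OF that]
        exact_A[OF that] exact_B[OF that] exact_C[OF that] exact_D[OF that] P_sym Q_sym R_pd
        LMI_dissipation LMI_supply, of z]
      H_coercive[OF alpha_nonneg[OF that] alpha_sum[OF that], of z]
    by linarith
  show ?thesis
    using robust_strict_QSR_dissipative_if_LMI[OF alpha_nonneg alpha_sum P_sym Q_sym LMI_dissipation]
      asymptotically_stabilizes_if_quadratic_lyapunov[OF P_pd \<open>h > 0\<close> decrease]
    by (rule conjI)
qed

end
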